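(* Let $E\in\mathbb R$, $\eta>0$ and $n\ge0$. Then, in the sense of quadratic forms, $$\tilde\Gamma(0)\ \ge\ \sum_{x\in S_n}\ \sum_{y\in\mathcal N_x^+}G(0,x;E+i\eta)\,\tilde\Gamma(y)\,G(0,x;E+i\eta)^*.$$
   Context: Let $K\ge 2$ be an integer and let $\mathcal T$ be the rooted tree with root $0$ in which every vertex has exactly $K$ children. $x_-$ denotes the parent of $x$, $\mathcal N_x^+$ the set of children of $x$, and $S_n$ the set of vertices at distance $n$ from $0$. $H$ acts on $\ell^2(\mathcal T;\mathbb C^W)$ with blocks $I_W$ between adjacent vertices, Hermitian matrices $U(x)$ on the diagonal, and $0$ otherwise. $G(x,y;z)$ is the $(x,y)$ block of $(H-z)^{-1}$. For $y\ne0$, $\Gamma(y)=G^{\mathcal T_{y_-}}(y,y;E+i\eta)$, the $(y,y)$ block of the resolvent of the restriction of $H$ to the tree with $y_-$ deleted. Also $\Gamma(0)=G(0,0;E+i\eta)$, and $\tilde\Gamma(y)=(\Gamma(y)-\Gamma(y)^* )/(2i)$. *)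

theory Defs
  imports "HOL-Analysis.Analysis"
begin

text \<open>Vertices of the rooted K-ary tree: words over {0..<K}; the root 0 is the empty word.
  The children of x are x @ [k], k < K; the parent of x (x nonempty) is butlast x.\<close>

definition tree_vertices :: "nat \<Rightarrow> nat list set" where
  "tree_vertices K = {xs. set xs \<subseteq> {..<K}}"

definition tree_parent :: "nat list \<Rightarrow> nat list" where
  "tree_parent x = butlast x"

definition tree_children :: "nat \<Rightarrow> nat list \<Rightarrow> nat list set" where
  "tree_children K x = {x @ [k] | k. k < K}"

definition sphere :: "nat \<Rightarrow> nat \<Rightarrow> nat list set" where
  "sphere K n = {x \<in> tree_vertices K. length x = n}"

definition tree_adj :: "nat \<Rightarrow> nat list \<Rightarrow> nat list \<Rightarrow> bool" where
  "tree_adj K x y \<longleftrightarrow> x \<in> tree_vertices K \<and> y \<in> tree_vertices K \<and>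
     ((x \<noteq> [] \<and> y = tree_parent x) \<or> (y \<noteq> [] \<and> x = tree_parent y))"

definition cadj :: "complex^'w^'w \<Rightarrow> complex^'w^'w" where
  "cadj A = (\<chi> i j. cnj (A $ j $ i))"

definition hermitian_mat :: "complex^'w^'w \<Rightarrow> bool" where
  "hermitian_mat A \<longleftrightarrow> cadj A = A"

text \<open>psi is (H_A - z)^{-1} applied to delta_y tensor v, where H_A is the restriction of H to
  the vertex set A: psi is supported on A, square summable, and solves the equation on A.
  (H psi)(x) = U(x) psi(x) + sum of psi over neighbours (blocks I_W).\<close>
definition res_sol ::
  "nat \<Rightarrow> (nat list \<Rightarrow> complex^'w^'w) \<Rightarrow> nat list set \<Rightarrow> complex \<Rightarrow> nat list \<Rightarrow> complex^'w
   \<Rightarrow> (nat list \<Rightarrow> complex^'w) \<Rightarrow> bool" where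
  "res_sol K U A z y v \<psi> \<longleftrightarrow>
     (\<forall>x. x \<notin> A \<longrightarrow> \<psi> x = 0) \<and>
     ((\<lambda>x. (norm (\<psi> x))\<^sup>2) summable_on A) \<and>
     (\<forall>x\<in>A. U x *v \<psi> x + (\<Sum>w\<in>{w\<in>A. tree_adj K x w}. \<psi> w) - z *s \<psi> x
              = (if x = y then v else 0))"

text \<open>(x,y) block of the resolvent (H_A - z)^{-1}: column j is the solution with v = e_j.\<close>
definition green ::
  "nat \<Rightarrow> (nat list \<Rightarrow> complex^'w^'w) \<Rightarrow> nat list set \<Rightarrow> complex \<Rightarrow> nat list \<Rightarrow> nat list
   \<Rightarrow> complex^'w^'w" where
  "green K U A z x y = (\<chi> i j. (THE \<psi>. res_sol K U A z y (axis j 1) \<psi>) x $ i)"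

definition Gam ::
  "nat \<Rightarrow> (nat list \<Rightarrow> complex^'w^'w) \<Rightarrow> real \<Rightarrow> real \<Rightarrow> nat list \<Rightarrow> complex^'w^'w" where
  "Gam K U E \<eta> y =
     (if y = [] then green K U (tree_vertices K) (Complex E \<eta>) [] []
      else green K U (tree_vertices K - {tree_parent y}) (Complex E \<eta>) y y)"

definition imag_part :: "complex^'w^'w \<Rightarrow> complex^'w^'w" where
  "imag_part A = (\<chi> i j. (A $ i $ j - cnj (A $ j $ i)) / (2 * \<i>))"

definition qform :: "complex^'w \<Rightarrow> complex^'w^'w \<Rightarrow> complex" where
  "qform v A = (\<Sum>i\<in>UNIV. \<Sum>j\<in>UNIV. cnj (v $ i) * A $ i $ j * v $ j)"

definition qf_le :: "complex^'w^'w \<Rightarrow> complex^'w^'w \<Rightarrow> bool" where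
  "qf_le A B \<longleftrightarrow> (\<forall>v. Re (qform v A) \<le> Re (qform v B))"

end

theory Submission
  imports Defs "HOL-Library.Function_Algebras" "HOL-Library.Diagonal_Subsequence"
begin

text \<open>Write \<open>z = E + i\<eta>\<close> and, for a test vector \<open>u\<close>, let \<open>\<Phi> = G(\<cdot>,0;z\<^bold>\<macron>) u\<close>, the \<open>\<ell>\<^sup>2\<close> solution
  of \<open>(H - z\<^bold>\<macron>) \<Phi> = \<delta>\<^sub>0 u\<close>. By the Ward identity, \<open>\<langle>u, Im \<Gamma>(0) u\<rangle> = \<eta> \<parallel>\<Phi>\<parallel>\<^sup>2\<close>.
  If \<open>y\<close> is a child of \<open>x\<close>, then \<open>-\<Phi>\<close> restricted to the subtree rooted at \<open>y\<close> solves the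
  resolvent equation of the tree with \<open>x\<close> deleted, with source \<open>\<Phi>(x)\<close> at \<open>y\<close>. Together with
  \<open>G(0,x;z)\<^sup>* = G(x,0;z\<^bold>\<macron>)\<close> and the Ward identity at \<open>y\<close>, this turns the \<open>(x,y)\<close> term of the sum
  into \<open>\<eta>\<close> times the \<open>\<ell>\<^sup>2\<close> mass of \<open>\<Phi>\<close> on that subtree. The subtrees rooted at the vertices
  of \<open>S\<^sub>n\<^sub>+\<^sub>1\<close> are disjoint, so the sum is at most \<open>\<eta> \<parallel>\<Phi>\<parallel>\<^sup>2\<close>.

  Because \<open>green\<close> is a definite description, the argument needs existence and uniqueness of
  \<open>\<ell>\<^sup>2\<close> solutions for \<open>Im z \<noteq> 0\<close>: uniqueness and an a priori bound come from Green's identity,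
  existence on finite vertex sets from linear algebra, and in general from compactness.\<close>

section \<open>Inner product and quadratic forms on \<open>\<complex>\<^sup>W\<close>\<close>

definition cinner :: "complex^'w \<Rightarrow> complex^'w \<Rightarrow> complex" where
  "cinner p q = (\<Sum>i\<in>UNIV. cnj (p$i) * q$i)"

lemma cinner_add_right: "cinner p (q + r) = cinner p q + cinner p r"
  by (simp add: cinner_def distrib_left sum.distrib)

lemma cinner_diff_right: "cinner p (q - r) = cinner p q - cinner p r"
  by (simp add: cinner_def right_diff_distrib sum_subtractf)

lemma cinner_add_left: "cinner (p + q) r = cinner p r + cinner q r"
  by (simp add: cinner_def distrib_right sum.distrib)

lemma cinner_diff_left: "cinner (p - q) r = cinner p r - cinner q r"
  by (simp add: cinner_def left_diff_distrib sum_subtractf)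

lemma cinner_zero_right [simp]: "cinner p 0 = 0"
  by (simp add: cinner_def)

lemma cinner_zero_left [simp]: "cinner 0 p = 0"
  by (simp add: cinner_def)

lemma cinner_scale_right: "cinner p (c *s q) = c * cinner p q"
  by (simp add: cinner_def sum_distrib_left algebra_simps)

lemma cinner_scale_left: "cinner (c *s p) q = cnj c * cinner p q"
  by (simp add: cinner_def sum_distrib_left algebra_simps)

lemma cinner_sum_right: "cinner p (sum f S) = (\<Sum>s\<in>S. cinner p (f s))"
  by (induction S rule: infinite_finite_induct) (auto simp: cinner_add_right)

lemma cinner_sum_left: "cinner (sum f S) q = (\<Sum>s\<in>S. cinner (f s) q)"
  by (induction S rule: infinite_finite_induct) (auto simp: cinner_add_left)

lemma cinner_axis_left: "cinner (axis i 1) q = q $ i"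
proof -
  have "cinner (axis i 1) q = (\<Sum>k\<in>UNIV. if k = i then q $ k else 0)"
    unfolding cinner_def by (intro sum.cong) (auto simp: axis_def)
  thus ?thesis by simp
qed

lemma cinner_axis_right: "cinner p (axis j 1) = cnj (p $ j)"
proof -
  have "cinner p (axis j 1) = (\<Sum>k\<in>UNIV. if k = j then cnj (p $ j) else 0)"
    unfolding cinner_def by (intro sum.cong) (auto simp: axis_def)
  thus ?thesis by simp
qed

lemma cinner_matrix_vector: "cinner p (M *v q) = cinner (cadj M *v p) q"
proof -
  have "cinner p (M *v q) = (\<Sum>i\<in>UNIV. \<Sum>j\<in>UNIV. cnj (p$i) * M$i$j * q$j)"
    by (simp add: cinner_def matrix_vector_mult_def sum_distrib_left mult.assoc)
  also have "\<dots> = (\<Sum>j\<in>UNIV. \<Sum>i\<in>UNIV. cnj (p$i) * M$i$j * q$j)"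
    by (rule sum.swap)
  also have "\<dots> = cinner (cadj M *v p) q"
    by (simp add: cinner_def matrix_vector_mult_def cadj_def sum_distrib_left sum_distrib_right mult_ac)
  finally show ?thesis .
qed

lemma norm_vec_power2: "(norm (p::complex^'w))\<^sup>2 = (\<Sum>i\<in>UNIV. (cmod (p$i))\<^sup>2)"
  by (simp add: norm_vec_def L2_set_def sum_nonneg)

lemma cinner_self: "cinner p p = of_real ((norm p)\<^sup>2)"
  unfolding cinner_def norm_vec_power2 of_real_sum
  by (intro sum.cong refl) (metis complex_norm_square mult.commute of_real_power)

lemma norm_cinner_le: "cmod (cinner p q) \<le> norm p * norm q"
proof -
  have "cmod (cinner p q) \<le> (\<Sum>i\<in>UNIV. cmod (cnj (p$i) * q$i))"
    unfolding cinner_def by (rule norm_sum)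
  also have "\<dots> = (\<Sum>i\<in>UNIV. \<bar>cmod (p$i)\<bar> * \<bar>cmod (q$i)\<bar>)"
    by (simp add: norm_mult)
  also have "\<dots> \<le> L2_set (\<lambda>i. cmod (p$i)) UNIV * L2_set (\<lambda>i. cmod (q$i)) UNIV"
    by (rule L2_set_mult_ineq)
  finally show ?thesis by (simp add: norm_vec_def)
qed

lemma norm_cinner_le_sum_squares: "cmod (cinner p q) \<le> (norm p)\<^sup>2 + (norm q)\<^sup>2"
proof -
  have "0 \<le> norm p * norm q" by simp
  thus ?thesis
    using norm_cinner_le[of p q] sum_squares_bound[of "norm p" "norm q"]
    unfolding power2_eq_square by linarith
qed

lemma cinner_summable:
  assumes "(\<lambda>x. (norm (f x))\<^sup>2) summable_on A" "(\<lambda>x. (norm (g x))\<^sup>2) summable_on A"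
  shows "(\<lambda>x. cinner (f x) (g x)) summable_on A"
proof (rule abs_summable_summable)
  show "(\<lambda>x. norm (cinner (f x) (g x))) summable_on A"
    by (rule summable_on_comparison_test[OF summable_on_add[OF assms]])
      (simp_all add: norm_cinner_le_sum_squares)
qed

lemma matrix_vector_mult_uminus_right: "M *v (- p) = - (M *v p :: 'a::comm_ring_1^'m)"
  by (simp add: vec_eq_iff matrix_vector_mult_def sum_negf)

lemma cadj_cadj [simp]: "cadj (cadj M) = M"
  by (simp add: vec_eq_iff cadj_def)

lemma imag_part_cadj: "imag_part (cadj G) = - imag_part G"
  by (simp add: vec_eq_iff imag_part_def cadj_def field_simps)

lemma qform_eq_cinner: "qform v A = cinner v (A *v v)"
  by (simp add: qform_def cinner_def matrix_vector_mult_def sum_distrib_left mult.assoc)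

lemma qform_uminus: "qform u (- Q) = - qform u Q"
  by (simp add: qform_def sum_negf)

lemma qform_sum: "qform u (sum F S) = (\<Sum>s\<in>S. qform u (F s))"
  by (induction S rule: infinite_finite_induct)
    (simp_all add: qform_def sum.distrib algebra_simps)

lemma qform_cadj_mult: "qform u (cadj M ** Q ** M) = qform (M *v u) Q"
  by (simp add: qform_eq_cinner cinner_matrix_vector matrix_vector_mul_assoc[symmetric])

lemma qform_imag_part: "qform u (imag_part G) = (cinner u (G *v u) - cinner (G *v u) u) / (2 * \<i>)"
proof -
  have "qform u (imag_part G) = (\<Sum>i\<in>UNIV. \<Sum>j\<in>UNIV.
      (cnj (u$i) * G$i$j * u$j - cnj (u$i) * cnj (G$j$i) * u$j) / (2 * \<i>))"
    unfolding qform_def imag_part_def by (intro sum.cong refl) (simp add: field_simps)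
  also have "\<dots> = ((\<Sum>i\<in>UNIV. \<Sum>j\<in>UNIV. cnj (u$i) * G$i$j * u$j)
      - (\<Sum>i\<in>UNIV. \<Sum>j\<in>UNIV. cnj (u$i) * cnj (G$j$i) * u$j)) / (2 * \<i>)"
    by (simp only: sum_divide_distrib[symmetric] sum_subtractf)
  also have "\<dots> = (qform u G - qform u (cadj G)) / (2 * \<i>)"
    by (simp add: qform_def cadj_def)
  also have "qform u (cadj G) = cinner (G *v u) u"
    by (simp add: qform_eq_cinner cinner_matrix_vector)
  finally show ?thesis by (simp add: qform_eq_cinner)
qed

lemma infsum_of_real:
  "f summable_on A \<Longrightarrow> infsum (\<lambda>x. of_real (f x) :: 'a::real_normed_algebra_1) A = of_real (infsum f A)"
  by (rule infsumI[OF has_sum_of_real[OF has_sum_infsum]])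

lemma has_sum_if_eq:
  "((\<lambda>x. if x = b then c else 0) has_sum (if b \<in> A then c else 0)) A"
proof -
  have "((\<lambda>x. if x = b then c else 0) has_sum (if b \<in> A then c else 0)) (A \<inter> {b})"
    by (rule has_sum_finiteI) auto
  thus ?thesis by (rule has_sum_cong_neutral[THEN iffD1, rotated -1]) auto
qed

lemma norm_add_power2_le: "(norm (p + q :: 'a::real_normed_vector))\<^sup>2 \<le> 2 * (norm p)\<^sup>2 + 2 * (norm q)\<^sup>2"
proof -
  have "(norm (p + q))\<^sup>2 \<le> (norm p + norm q)\<^sup>2"
    by (simp add: power_mono norm_triangle_ineq)
  also have "\<dots> \<le> 2 * (norm p)\<^sup>2 + 2 * (norm q)\<^sup>2"
    using sum_squares_bound[of "norm p" "norm q"] by (simp add: power2_sum)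
  finally show ?thesis .
qed

lemma le_power2_divide_if_mult_le_sqrt:
  fixes N a b :: real
  assumes "0 \<le> N" "0 < a" "a * N \<le> sqrt N * b"
  shows "N \<le> (b / a)\<^sup>2"
proof (cases "N = 0")
  case False
  with assms have "(a * sqrt N) * sqrt N \<le> b * sqrt N"
    by (simp add: mult.assoc real_sqrt_mult_self mult.commute[of "sqrt N"])
  hence "a * sqrt N \<le> b"
    using assms(1) False by (auto dest: mult_right_le_imp_le)
  with assms(2) have "sqrt N \<le> b / a"
    by (simp add: pos_le_divide_eq mult.commute)
  from power_mono[OF this, of 2] assms(1) show ?thesis by simp
qed simp

lemma sum_apply: "(sum g S) y = (\<Sum>s\<in>S. g s y)"
  by (induction S rule: infinite_finite_induct) auto

lemma tendsto_vector_scale: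
  "(g \<longlongrightarrow> l) F \<Longrightarrow> ((\<lambda>k. c *s (g k :: 'a::real_normed_field^'n)) \<longlongrightarrow> c *s l) F"
  by (intro vec_tendstoI) (simp add: tendsto_mult_left tendsto_vec_nth)

lemma tendsto_matrix_vector:
  "(g \<longlongrightarrow> l) F \<Longrightarrow> ((\<lambda>k. (M::complex^'n^'m) *v g k) \<longlongrightarrow> M *v l) F"
  by (rule isCont_tendsto_compose[OF matrix_vector_mult_linear_continuous_at])

lemma pointwise_convergent_subseq:
  fixes F :: "nat \<Rightarrow> 'a::countable \<Rightarrow> 'b::heine_borel"
  assumes "\<And>x. bounded (range (\<lambda>n. F n x))"
  obtains r where "strict_mono r" "\<And>x. convergent (\<lambda>k. F (r k) x)"
proof -
  define P where "P = (\<lambda>n (s::nat \<Rightarrow> nat). convergent (\<lambda>k. F (s k) (from_nat n)))"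
  interpret subseqs P
  proof
    fix n and s :: "nat \<Rightarrow> nat" assume "strict_mono s"
    have "bounded (range (\<lambda>k. F (s k) (from_nat n)))"
      using assms[of "from_nat n"] by (rule bounded_subset) auto
    then obtain l r where "strict_mono r" "((\<lambda>k. F (s k) (from_nat n)) \<circ> r) \<longlonglongrightarrow> l"
      using bounded_imp_convergent_subsequence by blast
    thus "\<exists>r'. strict_mono r' \<and> P n (s \<circ> r')"
      by (auto simp: P_def convergent_def o_def)
  qed
  have "convergent (\<lambda>k. F (diagseq k) x)" for x
  proof -
    have "P (to_nat x) (diagseq \<circ> (+) (Suc (to_nat x)))"
    proof (rule diagseq_holds)
      fix r s :: "nat \<Rightarrow> nat" and n assume "strict_mono r" "P n s"
      thus "P n (s \<circ> r)"
        using convergent_subseq_convergent[of "\<lambda>k. F (s k) (from_nat n)" r]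
        by (simp add: P_def o_def)
    qed
    hence "convergent (\<lambda>k. F (diagseq (k + Suc (to_nat x))) x)"
      by (simp add: P_def o_def add.commute)
    thus ?thesis by (rule convergent_ignore_initial_segment[THEN iffD1])
  qed
  with subseq_diagseq show thesis by (rule that)
qed

lemma (in vector_space) linear_inj_on_span_imp_surj_on:
  assumes lin: "Vector_Spaces.linear scale scale f" and fin: "finite X"
    and maps: "f ` span X \<subseteq> span X" and inj: "inj_on f (span X)"
  shows "span X \<subseteq> f ` span X"
proof -
  interpret lf: Vector_Spaces.linear scale scale f by (rule lin)
  obtain B where B: "B \<subseteq> X" "independent B" "X \<subseteq> span B"
    using maximal_independent_subset[of X] by blast
  have finB: "finite B" using B(1) fin finite_subset by blast
  have spanB: "span B = span X"
    using span_mono[OF B(1)] span_mono[OF B(3)] span_span[of B] by blast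
  have inj_B: "inj_on f B"
    using inj_on_subset[OF inj] B(1) span_superset by blast
  have indep: "independent (f ` B)"
    using lf.independent_injective_image[OF B(2)] inj spanB by simp
  have "span X \<subseteq> span (f ` B)"
  proof
    fix t assume t: "t \<in> span X"
    show "t \<in> span (f ` B)"
    proof (rule ccontr)
      assume nt: "t \<notin> span (f ` B)"
      have "insert t (f ` B) \<subseteq> span B"
        using t maps spanB span_superset[of B] B(1) by auto
      with independent_insertI[OF nt indep] finB
      have "card (insert t (f ` B)) \<le> card B"
        using independent_span_bound by blast
      moreover have "t \<notin> f ` B" using nt span_superset by blast
      ultimately show False using card_image[OF inj_B] finB by simp
    qed
  qed
  thus ?thesis using lf.span_image[of B] spanB by simp
qed

definition pointwise_scale :: "'a::field \<Rightarrow> ('b \<Rightarrow> 'a^'n) \<Rightarrow> 'b \<Rightarrow> 'a^'n" where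
  "pointwise_scale c f = (\<lambda>x. c *s f x)"

interpretation pointwise: vector_space "pointwise_scale :: 'a::field \<Rightarrow> ('b \<Rightarrow> 'a^'n) \<Rightarrow> _"
  by unfold_locales (simp_all add: pointwise_scale_def fun_eq_iff vec_eq_iff algebra_simps)

lemma pointwise_span_axis:
  assumes "finite B"
  shows "pointwise.span ((\<lambda>(x, j) y. if y = x then axis j 1 else 0) ` (B \<times> UNIV))
    = {f :: 'b \<Rightarrow> 'a::field^'n. \<forall>y. y \<notin> B \<longrightarrow> f y = 0}" (is "pointwise.span ?X = ?V")
proof
  show "pointwise.span ?X \<subseteq> ?V"
    by (rule pointwise.span_minimal) (auto simp: pointwise.subspace_def pointwise_scale_def)
  show "?V \<subseteq> pointwise.span ?X"
  proof
    fix f assume f: "f \<in> ?V"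
    have "f = (\<Sum>p\<in>B \<times> UNIV. pointwise_scale (f (fst p) $ snd p)
        (\<lambda>y. if y = fst p then axis (snd p) 1 else 0))"
    proof (intro ext iffD2[OF vec_eq_iff] allI)
      fix y i
      have "(\<Sum>p\<in>B \<times> UNIV. pointwise_scale (f (fst p) $ snd p)
          (\<lambda>y. if y = fst p then axis (snd p) 1 else 0)) y $ i
          = (\<Sum>x\<in>B. \<Sum>j\<in>UNIV. f x $ j * (if y = x \<and> i = j then 1 else 0))"
        by (simp add: pointwise_scale_def sum_component sum_apply sum.cartesian_product case_prod_unfold)
          (intro sum.cong refl, auto simp: axis_def)
      also have "\<dots> = (\<Sum>x\<in>B. if y = x then f x $ i else 0)"
        by (intro sum.cong refl) (auto simp: if_distrib cong: if_cong)
      also have "\<dots> = f y $ i"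
        using f assms by simp
      finally show "f y $ i = (\<Sum>p\<in>B \<times> UNIV. pointwise_scale (f (fst p) $ snd p)
          (\<lambda>y. if y = fst p then axis (snd p) 1 else 0)) y $ i" ..
    qed
    also have "\<dots> \<in> pointwise.span ?X"
      by (intro pointwise.span_sum pointwise.span_scale pointwise.span_base) force
    finally show "f \<in> pointwise.span ?X" .
  qed
qed

section \<open>Neighbourhoods, subtrees and edges\<close>

definition tree_nbhd :: "nat \<Rightarrow> nat list set \<Rightarrow> nat list \<Rightarrow> nat list set" where
  "tree_nbhd K A x = {w\<in>A. tree_adj K x w}"

lemma tree_adj_commute: "tree_adj K x w = tree_adj K w x"
  unfolding tree_adj_def by auto

lemma length_le_if_tree_adj: "tree_adj K x w \<Longrightarrow> length w \<le> Suc (length x)"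
  unfolding tree_adj_def tree_parent_def by auto

lemma tree_nbhd_subset: "tree_nbhd K A x \<subseteq> insert (butlast x) ((\<lambda>k. x @ [k]) ` {..<K})"
proof
  fix w assume "w \<in> tree_nbhd K A x"
  hence w: "set w \<subseteq> {..<K}" and "(x \<noteq> [] \<and> w = butlast x) \<or> (w \<noteq> [] \<and> x = butlast w)"
    by (auto simp: tree_nbhd_def tree_adj_def tree_parent_def tree_vertices_def)
  moreover have "w = x @ [last w]" "last w < K" if "w \<noteq> []" "x = butlast w"
    using that w by (auto simp: append_butlast_last_id dest: last_in_set)
  ultimately show "w \<in> insert (butlast x) ((\<lambda>k. x @ [k]) ` {..<K})"
    by blast
qed

lemma finite_tree_nbhd: "finite (tree_nbhd K A x)"
  by (rule finite_subset[OF tree_nbhd_subset]) auto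

lemma card_tree_nbhd_le: "card (tree_nbhd K A x) \<le> Suc K"
proof -
  have "card (tree_nbhd K A x) \<le> card (insert (butlast x) ((\<lambda>k. x @ [k]) ` {..<K}))"
    by (rule card_mono[OF _ tree_nbhd_subset]) auto
  also have "\<dots> \<le> Suc (card ((\<lambda>k. x @ [k]) ` {..<K}))"
    by (rule card_insert_le_m1) auto
  also have "\<dots> \<le> Suc K"
    using card_image_le[of "{..<K}" "\<lambda>k. x @ [k]"] by simp
  finally show ?thesis .
qed

definition subtree :: "nat \<Rightarrow> nat list \<Rightarrow> nat list set" where
  "subtree K y = {w \<in> tree_vertices K. \<exists>s. w = y @ s}"

lemma subtree_subset: "subtree K y \<subseteq> tree_vertices K"
  by (auto simp: subtree_def)

lemma self_in_subtree: "y \<in> tree_vertices K \<Longrightarrow> y \<in> subtree K y"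
  by (auto simp: subtree_def)

lemma butlast_notin_subtree: "y \<noteq> [] \<Longrightarrow> butlast y \<notin> subtree K y"
proof
  assume "y \<noteq> []" "butlast y \<in> subtree K y"
  then obtain s where "butlast y = y @ s" "0 < length y" by (auto simp: subtree_def)
  hence "length y - 1 = length y + length s" by (metis length_butlast length_append)
  with \<open>0 < length y\<close> show False by arith
qed

lemma subtree_disjoint:
  "length y = length y' \<Longrightarrow> y \<noteq> y' \<Longrightarrow> subtree K y \<inter> subtree K y' = {}"
  by (auto simp: subtree_def append_eq_append_conv)

lemma butlast_in_tree_vertices: "y \<in> tree_vertices K \<Longrightarrow> butlast y \<in> tree_vertices K"
  by (auto simp: tree_vertices_def dest: in_set_butlastD)

lemma tree_adj_leaving_subtree:
  assumes w: "w \<in> subtree K y" and adj: "tree_adj K w v" and v: "v \<notin> subtree K y"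
  shows "w = y \<and> v = butlast y"
proof -
  obtain s where ws: "w = y @ s" using w by (auto simp: subtree_def)
  have vT: "v \<in> tree_vertices K" using adj by (simp add: tree_adj_def)
  have v': "v \<noteq> y @ t" for t using v vT by (auto simp: subtree_def)
  from adj have "(w \<noteq> [] \<and> v = butlast w) \<or> (v \<noteq> [] \<and> w = butlast v)"
    by (simp add: tree_adj_def tree_parent_def)
  thus ?thesis
  proof (elim disjE conjE)
    assume "v \<noteq> []" "w = butlast v"
    hence "v = y @ (s @ [last v])" using ws by (metis append_butlast_last_id append.assoc)
    with v' show ?thesis by blast
  next
    assume "w \<noteq> []" "v = butlast w"
    thus ?thesis using ws v'[of "butlast s"] by (cases "s = []") (auto simp: butlast_append)
  qed
qed

lemma finite_sphere: "finite (sphere K n)"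
  by (rule finite_subset[OF _ finite_lists_length_le[of "{..<K}" n]])
    (auto simp: sphere_def tree_vertices_def)

lemma sum_sphere_children:
  "(\<Sum>x\<in>sphere K n. \<Sum>y\<in>tree_children K x. g x y) = (\<Sum>y\<in>sphere K (Suc n). g (butlast y) y)"
proof -
  have children: "tree_children K x = (\<lambda>k. x @ [k]) ` {..<K}" for x
    by (auto simp: tree_children_def)
  have "(\<Sum>x\<in>sphere K n. \<Sum>y\<in>tree_children K x. g x y)
      = (\<Sum>x\<in>sphere K n. \<Sum>y\<in>tree_children K x. g (butlast y) y)"
    by (intro sum.cong refl) (auto simp: tree_children_def)
  also have "\<dots> = (\<Sum>y\<in>(\<Union>x\<in>sphere K n. tree_children K x). g (butlast y) y)"
    by (rule sum.UNION_disjoint[symmetric]) (auto simp: finite_sphere children)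
  also have "(\<Union>x\<in>sphere K n. tree_children K x) = sphere K (Suc n)"
  proof (intro set_eqI iffI)
    fix y assume y: "y \<in> sphere K (Suc n)"
    hence "y \<noteq> []" "set y \<subseteq> {..<K}" by (auto simp: sphere_def tree_vertices_def)
    hence "y = butlast y @ [last y]" "last y < K" by (auto simp: append_butlast_last_id dest: last_in_set)
    moreover have "butlast y \<in> sphere K n"
      using y butlast_in_tree_vertices by (auto simp: sphere_def)
    ultimately show "y \<in> (\<Union>x\<in>sphere K n. tree_children K x)"
      by (auto simp: tree_children_def)
  qed (auto simp: sphere_def tree_children_def tree_vertices_def)
  finally show ?thesis .
qed

lemma sum_infsum_subtree_le:
  fixes f :: "nat list \<Rightarrow> real"
  assumes "f summable_on tree_vertices K" "\<And>w. 0 \<le> f w"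
  shows "(\<Sum>y\<in>sphere K m. infsum f (subtree K y)) \<le> infsum f (tree_vertices K)"
proof -
  have "(\<Sum>y\<in>sphere K m. infsum f (subtree K y)) = infsum f (\<Union>y\<in>sphere K m. subtree K y)"
  proof (rule sum_infsum)
    show "finite (sphere K m)" by (rule finite_sphere)
    show "f summable_on subtree K y" for y
      by (rule summable_on_subset_banach[OF assms(1) subtree_subset])
    show "y \<in> sphere K m \<Longrightarrow> y' \<in> sphere K m \<Longrightarrow> y \<noteq> y' \<Longrightarrow> subtree K y \<inter> subtree K y' = {}"
      for y y' by (rule subtree_disjoint) (auto simp: sphere_def)
  qed
  also have "\<dots> \<le> infsum f (tree_vertices K)"
    using subtree_subset[of K] assms
    by (intro infsum_mono_neutral summable_on_subset_banach[OF assms(1)]) auto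
  finally show ?thesis .
qed

abbreviation tree_edges :: "nat \<Rightarrow> nat list set \<Rightarrow> (nat list \<times> nat list) set" where
  "tree_edges K A \<equiv> Sigma A (tree_nbhd K A)"

lemma swap_tree_edges: "prod.swap ` tree_edges K A = tree_edges K A"
  by (force simp: tree_nbhd_def tree_adj_commute)

lemma has_sum_tree_edges:
  fixes h :: "nat list \<times> nat list \<Rightarrow> 'a::{comm_monoid_add,uniform_space,uniform_topological_group_add}"
  assumes "(h has_sum S) (tree_edges K A)"
  shows "((\<lambda>x. \<Sum>w\<in>tree_nbhd K A x. h (x, w)) has_sum S) A"
  by (rule has_sum_Sigma'[OF assms]) (simp add: has_sum_finiteI finite_tree_nbhd)

lemma has_sum_tree_edges_swap:
  fixes h :: "nat list \<times> nat list \<Rightarrow> 'a::{comm_monoid_add,uniform_space,uniform_topological_group_add}"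
  assumes "(h has_sum S) (tree_edges K A)"
  shows "((\<lambda>x. \<Sum>w\<in>tree_nbhd K A x. h (w, x)) has_sum S) A"
proof -
  have "((h \<circ> prod.swap) has_sum S) (tree_edges K A)"
    using assms has_sum_reindex[of prod.swap "tree_edges K A" h S]
    by (simp add: swap_tree_edges inj_on_def)
  from has_sum_tree_edges[OF this] show ?thesis by simp
qed

lemma summable_on_tree_edges_fst:
  fixes f :: "nat list \<Rightarrow> real"
  assumes "f summable_on A" "\<And>x. 0 \<le> f x"
  shows "(\<lambda>(x, w). f x) summable_on tree_edges K A"
proof (rule summable_on_SigmaI[where g="\<lambda>x. real (card (tree_nbhd K A x)) * f x"])
  show "(\<lambda>x. real (card (tree_nbhd K A x)) * f x) summable_on A"
  proof (rule summable_on_comparison_test[OF summable_on_cmult_right[OF assms(1)]])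
    show "real (card (tree_nbhd K A x)) * f x \<le> real (Suc K) * f x" for x
      using card_tree_nbhd_le[of K A x] assms(2)[of x] by (simp add: mult_right_mono)
  qed (simp add: assms(2))
qed (use assms in \<open>auto intro!: has_sum_finiteI simp: finite_tree_nbhd\<close>)

lemma summable_on_tree_edges_snd:
  fixes f :: "nat list \<Rightarrow> real"
  assumes "f summable_on A" "\<And>x. 0 \<le> f x"
  shows "(\<lambda>(x, w). f w) summable_on tree_edges K A"
proof -
  have "(\<lambda>(x, w). f x) summable_on prod.swap ` tree_edges K A"
    using summable_on_tree_edges_fst[OF assms] by (simp add: swap_tree_edges)
  hence "((\<lambda>(x, w). f x) \<circ> prod.swap) summable_on tree_edges K A"
    by (subst (asm) summable_on_reindex) auto
  thus ?thesis by (simp add: o_def case_prod_unfold)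
qed

lemma adjacency_cinner_has_sum:
  assumes "(\<lambda>x. (norm (\<phi> x))\<^sup>2) summable_on A" "(\<lambda>x. (norm (\<psi> x))\<^sup>2) summable_on A"
  obtains S where "((\<lambda>x. \<Sum>w\<in>tree_nbhd K A x. cinner (\<phi> x) (\<psi> w)) has_sum S) A"
    and "((\<lambda>x. \<Sum>w\<in>tree_nbhd K A x. cinner (\<phi> w) (\<psi> x)) has_sum S) A"
proof -
  let ?h = "\<lambda>(x, w). cinner (\<phi> x) (\<psi> w)"
  have "(\<lambda>p. norm (?h p)) summable_on tree_edges K A"
    using summable_on_add[OF summable_on_tree_edges_fst[OF assms(1)] summable_on_tree_edges_snd[OF assms(2)]]
  proof (rule summable_on_comparison_test)
    show "norm (?h p) \<le> (case p of (x, w) \<Rightarrow> (norm (\<phi> x))\<^sup>2) + (case p of (x, w) \<Rightarrow> (norm (\<psi> w))\<^sup>2)"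
      for p
      by (cases p) (simp add: norm_cinner_le_sum_squares)
  qed auto
  hence "(?h has_sum infsum ?h (tree_edges K A)) (tree_edges K A)"
    by (rule has_sum_infsum[OF abs_summable_summable])
  from has_sum_tree_edges[OF this] has_sum_tree_edges_swap[OF this] show thesis
    using that by simp
qed

section \<open>Solutions of the resolvent equation\<close>

lemma res_solD:
  assumes "res_sol K U A z b v \<psi>"
  shows "\<And>x. x \<notin> A \<Longrightarrow> \<psi> x = 0"
    and "(\<lambda>x. (norm (\<psi> x))\<^sup>2) summable_on A"
    and "\<And>x. x \<in> A \<Longrightarrow> U x *v \<psi> x + (\<Sum>w\<in>tree_nbhd K A x. \<psi> w) - z *s \<psi> x = (if x = b then v else 0)"
  using assms unfolding res_sol_def tree_nbhd_def by auto

lemma res_solI: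
  assumes "\<And>x. x \<notin> A \<Longrightarrow> \<psi> x = 0"
    and "(\<lambda>x. (norm (\<psi> x))\<^sup>2) summable_on A"
    and "\<And>x. x \<in> A \<Longrightarrow> U x *v \<psi> x + (\<Sum>w\<in>tree_nbhd K A x. \<psi> w) - z *s \<psi> x = (if x = b then v else 0)"
  shows "res_sol K U A z b v \<psi>"
  using assms unfolding res_sol_def tree_nbhd_def by auto

lemma res_sol_zero: "res_sol K U A z b 0 (\<lambda>x. 0)"
  by (rule res_solI) (auto simp: vec_eq_iff matrix_vector_mult_def)

lemma res_sol_lincomb:
  assumes s1: "res_sol K U A z b v1 \<psi>1" and s2: "res_sol K U A z b v2 \<psi>2"
  shows "res_sol K U A z b (c1 *s v1 + c2 *s v2) (\<lambda>x. c1 *s \<psi>1 x + c2 *s \<psi>2 x)"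
proof (rule res_solI)
  show "\<And>x. x \<notin> A \<Longrightarrow> c1 *s \<psi>1 x + c2 *s \<psi>2 x = 0"
    using res_solD(1)[OF s1] res_solD(1)[OF s2] by simp
  have norm_scale: "(norm (c *s p))\<^sup>2 = (cmod c)\<^sup>2 * (norm p)\<^sup>2" for c and p :: "complex^'w"
    by (simp add: norm_vec_power2 sum_distrib_left norm_mult power_mult_distrib)
  show "(\<lambda>x. (norm (c1 *s \<psi>1 x + c2 *s \<psi>2 x))\<^sup>2) summable_on A"
  proof (rule summable_on_comparison_test)
    show "(\<lambda>x. 2 * (cmod c1)\<^sup>2 * (norm (\<psi>1 x))\<^sup>2 + 2 * (cmod c2)\<^sup>2 * (norm (\<psi>2 x))\<^sup>2) summable_on A"
      using summable_on_add[OF summable_on_cmult_right[OF res_solD(2)[OF s1], of "2 * (cmod c1)\<^sup>2"]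
          summable_on_cmult_right[OF res_solD(2)[OF s2], of "2 * (cmod c2)\<^sup>2"]]
      by (simp add: mult.assoc)
    show "(norm (c1 *s \<psi>1 x + c2 *s \<psi>2 x))\<^sup>2
        \<le> 2 * (cmod c1)\<^sup>2 * (norm (\<psi>1 x))\<^sup>2 + 2 * (cmod c2)\<^sup>2 * (norm (\<psi>2 x))\<^sup>2"
      for x
      using norm_add_power2_le[of "c1 *s \<psi>1 x" "c2 *s \<psi>2 x"] by (simp add: norm_scale mult.assoc)
  qed simp
  fix x assume x: "x \<in> A"
  have "U x *v (c1 *s \<psi>1 x + c2 *s \<psi>2 x) + (\<Sum>w\<in>tree_nbhd K A x. c1 *s \<psi>1 w + c2 *s \<psi>2 w)
        - z *s (c1 *s \<psi>1 x + c2 *s \<psi>2 x)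
      = c1 *s (U x *v \<psi>1 x + (\<Sum>w\<in>tree_nbhd K A x. \<psi>1 w) - z *s \<psi>1 x)
        + c2 *s (U x *v \<psi>2 x + (\<Sum>w\<in>tree_nbhd K A x. \<psi>2 w) - z *s \<psi>2 x)"
    by (simp add: vec_eq_iff matrix_vector_mult_def sum_component sum.distrib sum_distrib_left
        algebra_simps)
  also have "\<dots> = (if x = b then c1 *s v1 + c2 *s v2 else 0)"
    by (simp add: res_solD(3)[OF s1 x] res_solD(3)[OF s2 x])
  finally show "U x *v (c1 *s \<psi>1 x + c2 *s \<psi>2 x) + (\<Sum>w\<in>tree_nbhd K A x. c1 *s \<psi>1 w + c2 *s \<psi>2 w)
      - z *s (c1 *s \<psi>1 x + c2 *s \<psi>2 x) = (if x = b then c1 *s v1 + c2 *s v2 else 0)" .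
qed

lemma res_sol_sum:
  assumes "finite S" "\<And>j. j \<in> S \<Longrightarrow> res_sol K U A z b (v j) (\<psi> j)"
  shows "res_sol K U A z b (\<Sum>j\<in>S. c j *s v j) (\<lambda>x. \<Sum>j\<in>S. c j *s \<psi> j x)"
  using assms
proof (induction S rule: finite_induct)
  case empty thus ?case using res_sol_zero by simp
next
  case (insert j S)
  hence "res_sol K U A z b (1 *s (\<Sum>j\<in>S. c j *s v j) + c j *s v j)
      (\<lambda>x. 1 *s (\<Sum>j\<in>S. c j *s \<psi> j x) + c j *s \<psi> j x)"
    by (intro res_sol_lincomb) auto
  thus ?case using insert by (simp add: add.commute)
qed

lemma res_sol_subtree:
  assumes y: "y \<in> tree_vertices K" "y \<noteq> []"
    and \<Phi>: "res_sol K U (tree_vertices K) z [] u \<Phi>"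
  shows "res_sol K U (tree_vertices K - {butlast y}) z y (\<Phi> (butlast y))
      (\<lambda>w. if w \<in> subtree K y then - \<Phi> w else 0)"
proof (rule res_solI)
  define T where "T = tree_vertices K"
  define x where "x = butlast y"
  have x: "x \<notin> subtree K y" "x \<in> T"
    using butlast_notin_subtree[OF y(2)] butlast_in_tree_vertices[OF y(1)] by (simp_all add: x_def T_def)
  show "w \<notin> tree_vertices K - {butlast y} \<Longrightarrow> (if w \<in> subtree K y then - \<Phi> w else 0) = 0" for w
    using subtree_subset[of K y] x by (auto simp: x_def)
  show "(\<lambda>w. (norm (if w \<in> subtree K y then - \<Phi> w else 0))\<^sup>2) summable_on tree_vertices K - {butlast y}"
    by (rule summable_on_comparison_test[OF summable_on_subset_banach[OF res_solD(2)[OF \<Phi>]]]) auto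
  fix w assume w: "w \<in> tree_vertices K - {butlast y}"
  have nbhd: "tree_nbhd K (T - {x}) w = tree_nbhd K T w - {x}"
    by (auto simp: tree_nbhd_def T_def)
  show "U w *v (if w \<in> subtree K y then - \<Phi> w else 0)
      + (\<Sum>v\<in>tree_nbhd K (tree_vertices K - {butlast y}) w. if v \<in> subtree K y then - \<Phi> v else 0)
      - z *s (if w \<in> subtree K y then - \<Phi> w else 0) = (if w = y then \<Phi> (butlast y) else 0)"
  proof (cases "w \<in> subtree K y")
    case True
    have "w \<noteq> []" using True y(2) by (auto simp: subtree_def)
    hence eq: "U w *v \<Phi> w + (\<Sum>v\<in>tree_nbhd K T w. \<Phi> v) - z *s \<Phi> w = 0"
      using res_solD(3)[OF \<Phi>, of w] w by (simp add: T_def)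
    have inside: "tree_nbhd K T w - {x} \<subseteq> subtree K y"
      using tree_adj_leaving_subtree[OF True] by (auto simp: tree_nbhd_def x_def)
    have x_nbhd: "x \<in> tree_nbhd K T w \<longleftrightarrow> w = y"
      using tree_adj_leaving_subtree[OF True, of x] x tree_adj_commute[of K x y]
      by (auto simp: tree_nbhd_def tree_adj_def tree_parent_def x_def T_def y)
    define s where "s = (\<Sum>v\<in>tree_nbhd K T w - {x}. \<Phi> v)"
    have "(\<Sum>v\<in>tree_nbhd K T w. \<Phi> v) = s + (if w = y then \<Phi> x else 0)"
    proof (cases "w = y")
      case True
      with x_nbhd have "x \<in> tree_nbhd K T w" by simp
      from sum.remove[OF finite_tree_nbhd this] True show ?thesis by (simp add: s_def add.commute)
    qed (use x_nbhd in \<open>simp add: s_def\<close>)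
    with eq have eq': "U w *v \<Phi> w + s - z *s \<Phi> w = - (if w = y then \<Phi> x else 0)"
      by (simp add: algebra_simps eq_neg_iff_add_eq_0)
    have "(\<Sum>v\<in>tree_nbhd K (T - {x}) w. if v \<in> subtree K y then - \<Phi> v else 0) = - s"
      unfolding nbhd s_def sum_negf[symmetric] using inside by (intro sum.cong) auto
    moreover have "U w *v (- \<Phi> w) + - s - z *s (- \<Phi> w) = - (U w *v \<Phi> w + s - z *s \<Phi> w)"
      by (simp add: matrix_vector_mult_uminus_right vec_eq_iff algebra_simps)
    ultimately show ?thesis
      using True eq' by (simp add: T_def x_def)
  next
    case False
    have "v \<notin> subtree K y" if "v \<in> tree_nbhd K (T - {x}) w" for v
      using that tree_adj_leaving_subtree[of v K y w] False w
      by (auto simp: tree_nbhd_def tree_adj_commute x_def T_def)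
    moreover have "w \<noteq> y" using False self_in_subtree[OF y(1)] by auto
    ultimately show ?thesis
      using False by (simp add: T_def x_def vec_eq_iff matrix_vector_mult_def)
  qed
qed

text \<open>The equation at a vertex only involves its finitely many neighbours, so it passes to
  pointwise limits of solutions on an exhausting sequence of truncations.\<close>

lemma res_sol_limit:
  assumes F: "\<And>k. res_sol K U {x\<in>A. length x \<le> n k} z b v (F k)" and n: "strict_mono n"
    and lim: "\<And>x. (\<lambda>k. F k x) \<longlonglongrightarrow> \<psi> x"
    and bound: "\<And>k G. finite G \<Longrightarrow> (\<Sum>x\<in>G. (norm (F k x))\<^sup>2) \<le> C"
  shows "res_sol K U A z b v \<psi>"
proof (rule res_solI)
  fix x assume "x \<notin> A"
  hence "F k x = 0" for k using res_solD(1)[OF F] by auto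
  thus "\<psi> x = 0" using lim[of x] by (simp add: LIMSEQ_const_iff)
next
  show "(\<lambda>x. (norm (\<psi> x))\<^sup>2) summable_on A"
  proof (rule nonneg_bdd_above_summable_on)
    show "bdd_above (sum (\<lambda>x. (norm (\<psi> x))\<^sup>2) ` {G. G \<subseteq> A \<and> finite G})"
    proof (rule bdd_aboveI2)
      fix G assume "G \<in> {G. G \<subseteq> A \<and> finite G}"
      hence G: "finite G" by simp
      have "(\<lambda>k. \<Sum>x\<in>G. (norm (F k x))\<^sup>2) \<longlonglongrightarrow> (\<Sum>x\<in>G. (norm (\<psi> x))\<^sup>2)"
        by (intro tendsto_sum tendsto_power tendsto_norm lim)
      thus "(\<Sum>x\<in>G. (norm (\<psi> x))\<^sup>2) \<le> C"
        by (rule LIMSEQ_le_const2) (use bound[OF G] in auto)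
    qed
  qed simp
next
  fix x assume x: "x \<in> A"
  let ?E = "\<lambda>\<phi>. U x *v \<phi> x + (\<Sum>w\<in>tree_nbhd K A x. \<phi> w) - z *s \<phi> x"
  have "\<forall>\<^sub>F k in sequentially. ?E (F k) = (if x = b then v else 0)"
  proof (rule eventually_sequentiallyI[of "Suc (length x)"])
    fix k assume "Suc (length x) \<le> k"
    hence k: "Suc (length x) \<le> n k" using seq_suble[OF n, of k] by simp
    hence "tree_nbhd K {x\<in>A. length x \<le> n k} x = tree_nbhd K A x"
      using length_le_if_tree_adj[of K x] by (force simp: tree_nbhd_def)
    thus "?E (F k) = (if x = b then v else 0)"
      using res_solD(3)[OF F, of x k] x k by simp
  qed
  hence "(\<lambda>k. ?E (F k)) \<longlonglongrightarrow> (if x = b then v else 0)"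
    by (rule tendsto_eventually)
  moreover have "(\<lambda>k. ?E (F k)) \<longlonglongrightarrow> ?E \<psi>"
    by (intro tendsto_diff tendsto_add tendsto_sum tendsto_matrix_vector tendsto_vector_scale lim)
  ultimately show "?E \<psi> = (if x = b then v else 0)"
    by (rule LIMSEQ_unique[rotated])
qed

definition resolvent_sol ::
  "nat \<Rightarrow> (nat list \<Rightarrow> complex^'w^'w) \<Rightarrow> nat list set \<Rightarrow> complex \<Rightarrow> nat list \<Rightarrow> complex^'w
   \<Rightarrow> nat list \<Rightarrow> complex^'w" where
  "resolvent_sol K U A z b v = (THE \<psi>. res_sol K U A z b v \<psi>)"

section \<open>Green's identity and its consequences\<close>

context
  fixes K :: nat and U :: "nat list \<Rightarrow> complex^'w^'w"
  assumes herm: "\<forall>x\<in>tree_vertices K. hermitian_mat (U x)"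
begin

text \<open>Summation by parts, using that \<open>U\<close> is Hermitian and the adjacency operator symmetric.\<close>

lemma green_identity:
  assumes A: "A \<subseteq> tree_vertices K"
    and \<psi>: "res_sol K U A z b u \<psi>" and \<phi>: "res_sol K U A z' a v \<phi>"
  shows "(if b \<in> A then cinner (\<phi> b) u else 0) - (if a \<in> A then cinner v (\<psi> a) else 0)
         = (cnj z' - z) * infsum (\<lambda>x. cinner (\<phi> x) (\<psi> x)) A"
proof -
  define L where "L x = (\<Sum>w\<in>tree_nbhd K A x. cinner (\<phi> x) (\<psi> w))" for x
  define R where "R x = (\<Sum>w\<in>tree_nbhd K A x. cinner (\<phi> w) (\<psi> x))" for x
  define P where "P x = cinner (\<phi> x) (\<psi> x)" for x
  define F where "F x = (if x = b then cinner (\<phi> b) u else 0) + - (if x = a then cinner v (\<psi> a) else 0)"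
    for x
  have local: "F x = L x + - R x + (cnj z' - z) * P x" if x: "x \<in> A" for x
  proof -
    have "cadj (U x) = U x" using herm A x by (auto simp: hermitian_mat_def)
    hence U_sym: "cinner (\<phi> x) (U x *v \<psi> x) = cinner (U x *v \<phi> x) (\<psi> x)"
      by (simp add: cinner_matrix_vector)
    have "F x = cinner (\<phi> x) (if x = b then u else 0) - cinner (if x = a then v else 0) (\<psi> x)"
      by (simp add: F_def)
    with U_sym show ?thesis
      unfolding res_solD(3)[OF \<psi> x, symmetric] res_solD(3)[OF \<phi> x, symmetric]
      by (simp add: cinner_add_right cinner_diff_right cinner_sum_right cinner_scale_right
          cinner_add_left cinner_diff_left cinner_sum_left cinner_scale_left L_def R_def P_def
          algebra_simps)
  qed
  obtain S where L: "(L has_sum S) A" and R: "(R has_sum S) A"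
    using adjacency_cinner_has_sum[OF res_solD(2)[OF \<phi>] res_solD(2)[OF \<psi>]]
    unfolding L_def[abs_def] R_def[abs_def] .
  have "P summable_on A"
    unfolding P_def by (rule cinner_summable[OF res_solD(2)[OF \<phi>] res_solD(2)[OF \<psi>]])
  hence "((\<lambda>x. L x + - R x + (cnj z' - z) * P x) has_sum (S + - S + (cnj z' - z) * infsum P A)) A"
    by (intro has_sum_add has_sum_uminusI has_sum_cmult_right has_sum_infsum L R)
  hence F1: "(F has_sum ((cnj z' - z) * infsum P A)) A"
    using has_sum_cong[of A F "\<lambda>x. L x + - R x + (cnj z' - z) * P x"] local by simp
  have F2: "(F has_sum ((if b \<in> A then cinner (\<phi> b) u else 0) + - (if a \<in> A then cinner v (\<psi> a) else 0))) A"
    unfolding F_def by (intro has_sum_add has_sum_uminusI has_sum_if_eq)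
  show ?thesis using has_sum_unique[OF F2 F1] by (simp add: P_def[abs_def])
qed

lemma res_sol_unique:
  assumes A: "A \<subseteq> tree_vertices K" and z: "Im z \<noteq> 0"
    and \<psi>1: "res_sol K U A z b v \<psi>1" and \<psi>2: "res_sol K U A z b v \<psi>2"
  shows "\<psi>1 = \<psi>2"
proof -
  define d where "d x = 1 *s \<psi>1 x + (-1) *s \<psi>2 x" for x
  have d: "res_sol K U A z b 0 d"
    using res_sol_lincomb[OF \<psi>1 \<psi>2, of 1 "-1"] by (simp add: d_def[abs_def])
  have "0 = (cnj z - z) * infsum (\<lambda>x. cinner (d x) (d x)) A"
    using green_identity[OF A d d] by (simp only: cinner_zero_left cinner_zero_right if_cancel diff_zero)
  moreover have "cnj z \<noteq> z" using z by (simp add: complex_eq_iff)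
  ultimately have "infsum (\<lambda>x. (norm (d x))\<^sup>2) A = 0"
    by (simp only: cinner_self infsum_of_real[OF res_solD(2)[OF d]]) simp
  hence "norm (d x) = 0" if "x \<in> A" for x
    using nonneg_infsum_le_0D[OF _ res_solD(2)[OF d]] that by force
  hence "d x = 0" for x using res_solD(1)[OF d, of x] by (cases "x \<in> A") auto
  thus ?thesis by (auto simp: d_def vec_eq_iff)
qed

lemma res_sol_norm_bound:
  assumes A: "A \<subseteq> tree_vertices K" and z: "Im z \<noteq> 0" and \<psi>: "res_sol K U A z b v \<psi>"
  shows "infsum (\<lambda>x. (norm (\<psi> x))\<^sup>2) A \<le> (norm v / \<bar>Im z\<bar>)\<^sup>2"
proof -
  define N where "N = infsum (\<lambda>x. (norm (\<psi> x))\<^sup>2) A"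
  have N0: "0 \<le> N" unfolding N_def by (rule infsum_nonneg) simp
  have identity: "(if b \<in> A then cinner (\<psi> b) v else 0) - (if b \<in> A then cinner v (\<psi> b) else 0)
      = (cnj z - z) * of_real N"
    using green_identity[OF A \<psi> \<psi>]
    by (simp only: cinner_self N_def infsum_of_real[OF res_solD(2)[OF \<psi>]])
  have "\<bar>Im z\<bar> * N \<le> sqrt N * norm v"
  proof (cases "b \<in> A")
    case True
    have "(norm (\<psi> b))\<^sup>2 \<le> N"
      using finite_sum_le_infsum[OF res_solD(2)[OF \<psi>], of "{b}"] True by (simp add: N_def)
    hence \<psi>b: "norm (\<psi> b) \<le> sqrt N" by (simp add: real_le_rsqrt)
    have "2 * \<bar>Im z\<bar> * N = cmod (cinner (\<psi> b) v - cinner v (\<psi> b))"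
      using identity True N0 by (simp add: norm_mult complex_eq_iff cmod_def abs_mult)
    also have "\<dots> \<le> cmod (cinner (\<psi> b) v) + cmod (cinner v (\<psi> b))"
      by (rule norm_triangle_ineq4)
    also have "\<dots> \<le> 2 * (norm (\<psi> b) * norm v)"
      using norm_cinner_le[of "\<psi> b" v] norm_cinner_le[of v "\<psi> b"] by (simp add: mult.commute)
    also have "\<dots> \<le> 2 * (sqrt N * norm v)"
      using \<psi>b by (simp add: mult_right_mono)
    finally show ?thesis by simp
  next
    case False
    with identity z show ?thesis by (simp add: complex_eq_iff)
  qed
  from le_power2_divide_if_mult_le_sqrt[OF N0 _ this] z show ?thesis
    by (simp add: N_def)
qed

lemma res_sol_exists_finite:
  assumes B: "finite B" "B \<subseteq> tree_vertices K" and z: "Im z \<noteq> 0"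
  shows "\<exists>\<psi>. res_sol K U B z b v \<psi>"
proof -
  define X where "X = (\<lambda>(x, j) y. if y = x then axis j (1::complex) else 0) ` (B \<times> (UNIV :: 'w set))"
  have span_X: "pointwise.span X = {f :: nat list \<Rightarrow> complex^'w. \<forall>y. y \<notin> B \<longrightarrow> f y = 0}"
    unfolding X_def by (rule pointwise_span_axis[OF B(1)])
  define L where "L f = (\<lambda>x. if x \<in> B then U x *v f x + (\<Sum>w\<in>tree_nbhd K B x. f w) - z *s f x else 0)"
    for f :: "nat list \<Rightarrow> complex^'w"
  have lin: "Vector_Spaces.linear pointwise_scale pointwise_scale L"
    unfolding Vector_Spaces.linear_iff using pointwise.vector_space_axioms
    by (auto simp: L_def pointwise_scale_def fun_eq_iff vec_eq_iff matrix_vector_mult_def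
        sum.distrib sum_distrib_left algebra_simps)
  interpret lf: Vector_Spaces.linear pointwise_scale pointwise_scale L by (rule lin)
  have solution: "res_sol K U B z b w f"
    if f: "f \<in> pointwise.span X" "L f = (\<lambda>x. if x \<in> B \<and> x = b then w else 0)" for f w
  proof (rule res_solI)
    show "x \<notin> B \<Longrightarrow> f x = 0" for x using f(1) by (simp add: span_X)
    show "U x *v f x + (\<Sum>w\<in>tree_nbhd K B x. f w) - z *s f x = (if x = b then w else 0)"
      if "x \<in> B" for x
      using fun_cong[OF f(2), of x] that by (simp add: L_def)
  qed (simp add: B(1))
  have maps: "L ` pointwise.span X \<subseteq> pointwise.span X" by (auto simp: span_X L_def)
  have finite_X: "finite X" unfolding X_def using B(1) by simp
  have "inj_on L (pointwise.span X)"
    unfolding lf.inj_on_iff_eq_0[OF pointwise.subspace_span]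
    using solution[where w = 0] res_sol_unique[OF B(2) z _ res_sol_zero] by (auto simp: zero_fun_def)
  then have surj: "pointwise.span X \<subseteq> L ` pointwise.span X"
    by (rule pointwise.linear_inj_on_span_imp_surj_on[OF lin finite_X maps])
  have "(\<lambda>x. if x \<in> B \<and> x = b then v else 0) \<in> pointwise.span X"
    by (simp add: span_X)
  with surj obtain f where "f \<in> pointwise.span X" "L f = (\<lambda>x. if x \<in> B \<and> x = b then v else 0)"
    by (auto simp del: span_X)
  with solution show ?thesis by blast
qed

text \<open>Solutions on the finite truncations \<open>{x \<in> A. length x \<le> n}\<close> are uniformly bounded in
  \<open>\<ell>\<^sup>2\<close>, so a subsequence converges pointwise.\<close>

lemma res_sol_exists:
  assumes A: "A \<subseteq> tree_vertices K" and z: "Im z \<noteq> 0"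
  shows "\<exists>\<psi>. res_sol K U A z b v \<psi>"
proof -
  define B where "B n = {x\<in>A. length x \<le> n}" for n
  have finB: "finite (B n)" for n
    by (rule finite_subset[OF _ finite_lists_length_le[of "{..<K}" n]])
      (use A in \<open>auto simp: B_def tree_vertices_def\<close>)
  have BT: "B n \<subseteq> tree_vertices K" for n using A by (auto simp: B_def)
  have "\<forall>n. \<exists>\<psi>. res_sol K U (B n) z b v \<psi>"
    using res_sol_exists_finite[OF finB BT z] by blast
  then obtain F where F: "\<And>n. res_sol K U (B n) z b v (F n)"
    by metis
  have bound: "(\<Sum>x\<in>G. (norm (F n x))\<^sup>2) \<le> (norm v / \<bar>Im z\<bar>)\<^sup>2" if "finite G" for n G
  proof -
    have "(\<Sum>x\<in>G. (norm (F n x))\<^sup>2) = (\<Sum>x\<in>G \<inter> B n. (norm (F n x))\<^sup>2)"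
      using res_solD(1)[OF F] that by (intro sum.mono_neutral_right) auto
    also have "\<dots> \<le> (\<Sum>x\<in>B n. (norm (F n x))\<^sup>2)"
      by (rule sum_mono2[OF finB]) auto
    also have "\<dots> \<le> (norm v / \<bar>Im z\<bar>)\<^sup>2"
      using res_sol_norm_bound[OF BT z F] finB by simp
    finally show ?thesis .
  qed
  have "norm (F n x) \<le> norm v / \<bar>Im z\<bar>" for n x
    using bound[of "{x}" n] by (simp add: power2_le_iff_abs_le)
  hence bdd: "bounded (range (\<lambda>n. F n x))" for x
    by (auto simp: bounded_iff)
  have "\<exists>r. strict_mono r \<and> (\<forall>x. convergent (\<lambda>k. F (r k) x))"
    by (rule pointwise_convergent_subseq[where F = F]) (use bdd in auto)
  then obtain r where r: "strict_mono r" "\<And>x. convergent (\<lambda>k. F (r k) x)"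
    by blast
  have "res_sol K U A z b v (\<lambda>x. lim (\<lambda>k. F (r k) x))"
    using F[unfolded B_def] r(1) r(2)[unfolded convergent_LIMSEQ_iff] bound
    by (rule res_sol_limit)
  thus ?thesis by blast
qed

lemma res_sol_resolvent_sol:
  assumes "A \<subseteq> tree_vertices K" "Im z \<noteq> 0"
  shows "res_sol K U A z b v (resolvent_sol K U A z b v)"
  unfolding resolvent_sol_def
  by (rule theI'[OF ex_ex1I[OF res_sol_exists[OF assms] res_sol_unique[OF assms]]])

lemma resolvent_sol_eq:
  assumes "A \<subseteq> tree_vertices K" "Im z \<noteq> 0" "res_sol K U A z b v \<psi>"
  shows "resolvent_sol K U A z b v = \<psi>"
  using res_sol_unique[OF assms(1,2) res_sol_resolvent_sol[OF assms(1,2)] assms(3)] .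

lemma green_mult_vector:
  assumes A: "A \<subseteq> tree_vertices K" and z: "Im z \<noteq> 0"
  shows "green K U A z x b *v u = resolvent_sol K U A z b u x"
proof -
  have "res_sol K U A z b (\<Sum>j\<in>UNIV. (u$j) *s axis j 1)
      (\<lambda>x. \<Sum>j\<in>UNIV. (u$j) *s resolvent_sol K U A z b (axis j 1) x)"
    by (rule res_sol_sum) (auto intro: res_sol_resolvent_sol[OF A z])
  hence "resolvent_sol K U A z b u = (\<lambda>x. \<Sum>j\<in>UNIV. (u$j) *s resolvent_sol K U A z b (axis j 1) x)"
    using resolvent_sol_eq[OF A z] by (simp add: basis_expansion)
  thus ?thesis
    by (simp add: green_def resolvent_sol_def[symmetric] vec_eq_iff matrix_vector_mult_def
        sum_component mult.commute)
qed

lemma green_eq_cadj: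
  assumes A: "A \<subseteq> tree_vertices K" and z: "Im z \<noteq> 0"
  shows "green K U A z a b = cadj (green K U A (cnj z) b a)"
proof -
  have "green K U A z a b $ i $ j = cnj (green K U A (cnj z) b a $ j $ i)" for i j
  proof -
    define \<psi> where "\<psi> = resolvent_sol K U A z b (axis j 1)"
    define \<phi> where "\<phi> = resolvent_sol K U A (cnj z) a (axis i 1)"
    have \<psi>: "res_sol K U A z b (axis j 1) \<psi>"
      unfolding \<psi>_def by (rule res_sol_resolvent_sol[OF A z])
    have \<phi>: "res_sol K U A (cnj z) a (axis i 1) \<phi>"
      unfolding \<phi>_def by (rule res_sol_resolvent_sol) (use A z in simp_all)
    have "cinner (\<phi> b) (axis j 1) = cinner (axis i 1) (\<psi> a)"
      using green_identity[OF A \<psi> \<phi>] res_solD(1)[OF \<psi>, of a] res_solD(1)[OF \<phi>, of b]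
      by (cases "a \<in> A"; cases "b \<in> A") auto
    hence "cnj (\<phi> b $ j) = \<psi> a $ i"
      by (simp add: cinner_axis_left cinner_axis_right)
    thus ?thesis by (simp add: green_def \<psi>_def \<phi>_def resolvent_sol_def)
  qed
  thus ?thesis by (simp add: vec_eq_iff cadj_def)
qed

lemma qform_imag_green:
  assumes A: "A \<subseteq> tree_vertices K" and z: "Im z \<noteq> 0"
  shows "qform u (imag_part (green K U A z b b))
    = of_real (Im z * infsum (\<lambda>x. (norm (green K U A (cnj z) x b *v u))\<^sup>2) A)"
proof -
  have z': "Im (cnj z) \<noteq> 0" using z by simp
  define \<psi> where "\<psi> = resolvent_sol K U A (cnj z) b u"
  have \<psi>: "res_sol K U A (cnj z) b u \<psi>"
    unfolding \<psi>_def by (rule res_sol_resolvent_sol[OF A z'])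
  have G: "green K U A (cnj z) x b *v u = \<psi> x" for x
    unfolding \<psi>_def by (rule green_mult_vector[OF A z'])
  define N where "N = infsum (\<lambda>x. (norm (\<psi> x))\<^sup>2) A"
  have "(if b \<in> A then cinner (\<psi> b) u else 0) - (if b \<in> A then cinner u (\<psi> b) else 0)
      = (z - cnj z) * of_real N"
    using green_identity[OF A \<psi> \<psi>]
    by (simp only: cinner_self N_def infsum_of_real[OF res_solD(2)[OF \<psi>]] complex_cnj_cnj)
  hence Green: "cinner (\<psi> b) u - cinner u (\<psi> b) = (z - cnj z) * of_real N"
    using res_solD(1)[OF \<psi>, of b] by (cases "b \<in> A") auto
  have "qform u (imag_part (green K U A z b b)) = - qform u (imag_part (green K U A (cnj z) b b))"
    using green_eq_cadj[OF A z, of b b] by (simp add: imag_part_cadj qform_uminus)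
  also have "\<dots> = (cinner (\<psi> b) u - cinner u (\<psi> b)) / (2 * \<i>)"
    unfolding qform_imag_part G by (simp only: minus_divide_left minus_diff_eq)
  also have "\<dots> = (z - cnj z) * of_real N / (2 * \<i>)"
    by (simp only: Green)
  also have "\<dots> = of_real (Im z * N)"
    by (simp add: complex_diff_cnj field_simps)
  finally show ?thesis by (simp add: G N_def)
qed

lemma qform_imag_Gam_root:
  assumes "\<eta> \<noteq> 0"
  shows "qform u (imag_part (Gam K U E \<eta> [])) = of_real (\<eta> * infsum
    (\<lambda>w. (norm (resolvent_sol K U (tree_vertices K) (cnj (Complex E \<eta>)) [] u w))\<^sup>2) (tree_vertices K))"
  using qform_imag_green[of "tree_vertices K" "Complex E \<eta>" u "[]"] assms
  by (simp add: Gam_def green_mult_vector)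

lemma qform_Gam_child:
  fixes E \<eta> :: real and u :: "complex^'w"
  assumes "\<eta> \<noteq> 0" and x: "x \<in> tree_vertices K" and y: "y \<in> tree_children K x"
  defines "G \<equiv> green K U (tree_vertices K) (Complex E \<eta>) [] x"
    and "\<Phi> \<equiv> resolvent_sol K U (tree_vertices K) (cnj (Complex E \<eta>)) [] u"
  shows "qform u (G ** imag_part (Gam K U E \<eta> y) ** cadj G)
    = of_real (\<eta> * infsum (\<lambda>w. (norm (\<Phi> w))\<^sup>2) (subtree K y))"
proof -
  let ?T = "tree_vertices K" and ?z = "Complex E \<eta>"
  have z: "Im ?z \<noteq> 0" "Im (cnj ?z) \<noteq> 0" using assms(1) by simp_all
  have T: "?T \<subseteq> ?T" "?T - {x} \<subseteq> ?T" by auto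
  have yT: "y \<in> ?T" "y \<noteq> []" "butlast y = x"
    using x y by (auto simp: tree_children_def tree_vertices_def)
  have "G = cadj (green K U ?T (cnj ?z) x [])"
    unfolding G_def by (rule green_eq_cadj[OF T(1) z(1)])
  hence "qform u (G ** imag_part (Gam K U E \<eta> y) ** cadj G)
      = qform (\<Phi> x) (imag_part (green K U (?T - {x}) ?z y y))"
    using yT by (simp add: qform_cadj_mult green_mult_vector[OF T(1) z(2)] \<Phi>_def Gam_def tree_parent_def)
  also have "\<dots> = of_real (\<eta> * infsum (\<lambda>w. (norm (green K U (?T - {x}) (cnj ?z) w y *v \<Phi> x))\<^sup>2) (?T - {x}))"
    using qform_imag_green[OF T(2) z(1)] by simp
  also have "infsum (\<lambda>w. (norm (green K U (?T - {x}) (cnj ?z) w y *v \<Phi> x))\<^sup>2) (?T - {x})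
      = infsum (\<lambda>w. (norm (\<Phi> w))\<^sup>2) (subtree K y)"
  proof -
    have "res_sol K U (?T - {x}) (cnj ?z) y (\<Phi> x) (\<lambda>w. if w \<in> subtree K y then - \<Phi> w else 0)"
      unfolding \<Phi>_def using res_sol_subtree[OF yT(1,2) res_sol_resolvent_sol[OF T(1) z(2), of "[]" u]] yT(3)
      by simp
    hence "green K U (?T - {x}) (cnj ?z) w y *v \<Phi> x = (if w \<in> subtree K y then - \<Phi> w else 0)" for w
      using green_mult_vector[OF T(2) z(2)] resolvent_sol_eq[OF T(2) z(2)] by simp
    moreover have "subtree K y \<subseteq> ?T - {x}"
      using subtree_subset[of K y] butlast_notin_subtree[OF yT(2), of K] yT(3) by auto
    ultimately show ?thesis
      by (intro infsum_cong_neutral) auto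
  qed
  finally show ?thesis .
qed

end

theorem lemmal:
  fixes K :: nat and U :: "nat list \<Rightarrow> complex^'w^'w" and E \<eta> :: real and n :: nat
  assumes "K \<ge> 2"
    and "\<forall>x\<in>tree_vertices K. hermitian_mat (U x)"
    and "\<eta> > 0"
  shows "qf_le
     (\<Sum>x\<in>sphere K n. \<Sum>y\<in>tree_children K x.
        green K U (tree_vertices K) (Complex E \<eta>) [] x ** imag_part (Gam K U E \<eta> y)
          ** cadj (green K U (tree_vertices K) (Complex E \<eta>) [] x))
     (imag_part (Gam K U E \<eta> []))"
proof -
  define G where "G x = green K U (tree_vertices K) (Complex E \<eta>) [] x" for x
  have "Re (qform u (\<Sum>x\<in>sphere K n. \<Sum>y\<in>tree_children K x. G x ** imag_part (Gam K U E \<eta> y) ** cadj (G x)))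
      \<le> Re (qform u (imag_part (Gam K U E \<eta> [])))" for u
  proof -
    define f where "f = (\<lambda>w. (norm (resolvent_sol K U (tree_vertices K) (cnj (Complex E \<eta>)) [] u w))\<^sup>2)"
    have "Im (cnj (Complex E \<eta>)) \<noteq> 0" using assms(3) by simp
    hence f: "f summable_on tree_vertices K" "\<And>w. 0 \<le> f w"
      unfolding f_def using res_solD(2)[OF res_sol_resolvent_sol[OF assms(2) order_refl]] by simp_all
    have "Re (qform u (\<Sum>x\<in>sphere K n. \<Sum>y\<in>tree_children K x. G x ** imag_part (Gam K U E \<eta> y) ** cadj (G x)))
        = (\<Sum>x\<in>sphere K n. \<Sum>y\<in>tree_children K x. \<eta> * infsum f (subtree K y))"
      using assms(2,3) by (simp add: qform_sum qform_Gam_child G_def f_def sphere_def)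
    also have "\<dots> = (\<Sum>y\<in>sphere K (Suc n). \<eta> * infsum f (subtree K y))"
      by (rule sum_sphere_children)
    also have "\<dots> \<le> \<eta> * infsum f (tree_vertices K)"
      using sum_infsum_subtree_le[OF f] assms(3) by (simp add: sum_distrib_left[symmetric])
    also have "\<dots> = Re (qform u (imag_part (Gam K U E \<eta> [])))"
      using assms(2,3) by (simp add: qform_imag_Gam_root f_def)
    finally show ?thesis .
  qed
  thus ?thesis by (simp add: qf_le_def G_def)
qed

end
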